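(* Let $\rho\in\Delta_{|\mathcal S|}$ have all entries positive, let $\pi_0$ be a non-optimal policy, and let $(\bar s,\bar a)$ be a non-optimal pair with $\pi_0(\bar a\mid\bar s)>0$ and $A^{\pi^*}(\bar s,\bar a)\ge\frac{1-\gamma}{|\mathcal S||\mathcal A|}[f_\rho(\pi_0)-f_\rho(\pi^* )]$. Then for any policy $\pi$, $$\pi(\bar a\mid\bar s)\le\frac{|\mathcal S||\mathcal A|}{(1-\gamma)\rho(\bar s)}\cdot\frac{f_\rho(\pi)-f_\rho(\pi^* )}{f_\rho(\pi_0)-f_\rho(\pi^* )}.$$
   Context: An unregularized infinite-horizon discounted MDP: finite $\mathcal S$, $\mathcal A$, transition probabilities $\mathcal P(s'\mid s,a)$, cost $c$, discount $\gamma\in[0,1)$. A policy assigns $\pi(\cdot\mid s)\in\Delta_{|\mathcal A|}$. $V^\pi(s)=\mathbb E[\sum_{t\ge0}\gamma^tc(s_t,a_t)\mid s_0=s,\ a_t\sim\pi(\cdot\mid s_t),\ s_{t+1}\sim\mathcal P(\cdot\mid s_t,a_t)]$, $Q^\pi(s,a)$ the same with $a_0=a$, $A^\pi(s,a):=Q^\pi(s,a)-V^\pi(s)$. $\pi^*$ is a fixed optimal policy. $f_\rho(\pi):=\sum_s\rho(s)V^\pi(s)$. A pair $(s,a)$ is non-optimal if $\pi^*(a\mid s)=0$; a policy $\pi$ is non-optimal if $f_\rho(\pi)-f_\rho(\pi^* )>0$. (Such a pair $(\bar s,\bar a)$ exists for every non-optimal $\pi_0$.) *)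

theory Defs
  imports "HOL-Analysis.Analysis"
begin

text \<open>Finite MDP: states of finite type 's, actions of finite type 'a.
  Transition kernel P s a s' = P(s' | s,a), cost c s a, policy pol s a = pol(a | s).\<close>

definition stochastic_kernel :: "('s::finite \<Rightarrow> 'a::finite \<Rightarrow> 's \<Rightarrow> real) \<Rightarrow> bool" where
  "stochastic_kernel P \<longleftrightarrow> (\<forall>s a s'. P s a s' \<ge> 0) \<and> (\<forall>s a. (\<Sum>s'\<in>UNIV. P s a s') = 1)"

definition is_policy :: "('s::finite \<Rightarrow> 'a::finite \<Rightarrow> real) \<Rightarrow> bool" where
  "is_policy pol \<longleftrightarrow> (\<forall>s a. pol s a \<ge> 0) \<and> (\<forall>s. (\<Sum>a\<in>UNIV. pol s a) = 1)"

definition is_distribution :: "('s::finite \<Rightarrow> real) \<Rightarrow> bool" where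
  "is_distribution rho \<longleftrightarrow> (\<forall>s. rho s \<ge> 0) \<and> (\<Sum>s\<in>UNIV. rho s) = 1"

fun state_dist :: "('s::finite \<Rightarrow> 'a::finite \<Rightarrow> 's \<Rightarrow> real) \<Rightarrow> ('s \<Rightarrow> 'a \<Rightarrow> real)
    \<Rightarrow> 's \<Rightarrow> nat \<Rightarrow> 's \<Rightarrow> real" where
  "state_dist P pol s 0 s' = (if s' = s then 1 else 0)"
| "state_dist P pol s (Suc t) s' =
     (\<Sum>u\<in>UNIV. state_dist P pol s t u * (\<Sum>a\<in>UNIV. pol u a * P u a s'))"

definition pol_cost :: "('s::finite \<Rightarrow> 'a::finite \<Rightarrow> real) \<Rightarrow> ('s \<Rightarrow> 'a \<Rightarrow> real) \<Rightarrow> 's \<Rightarrow> real" where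
  "pol_cost c pol u = (\<Sum>a\<in>UNIV. pol u a * c u a)"

definition Vf :: "('s::finite \<Rightarrow> 'a::finite \<Rightarrow> 's \<Rightarrow> real) \<Rightarrow> ('s \<Rightarrow> 'a \<Rightarrow> real) \<Rightarrow> real
    \<Rightarrow> ('s \<Rightarrow> 'a \<Rightarrow> real) \<Rightarrow> 's \<Rightarrow> real" where
  "Vf P c \<gamma> pol s = (\<Sum>t. \<gamma> ^ t * (\<Sum>u\<in>UNIV. state_dist P pol s t u * pol_cost c pol u))"

text \<open>Q^pol(s,a) = E[sum_t gamma^t c(s_t,a_t) | s_0 = s, a_0 = a]: the first step
  costs c(s,a), after which the chain starts afresh from s_1 ~ P(.|s,a).\<close>
definition Qf :: "('s::finite \<Rightarrow> 'a::finite \<Rightarrow> 's \<Rightarrow> real) \<Rightarrow> ('s \<Rightarrow> 'a \<Rightarrow> real) \<Rightarrow> real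
    \<Rightarrow> ('s \<Rightarrow> 'a \<Rightarrow> real) \<Rightarrow> 's \<Rightarrow> 'a \<Rightarrow> real" where
  "Qf P c \<gamma> pol s a = c s a + \<gamma> * (\<Sum>s'\<in>UNIV. P s a s' * Vf P c \<gamma> pol s')"

definition Af :: "('s::finite \<Rightarrow> 'a::finite \<Rightarrow> 's \<Rightarrow> real) \<Rightarrow> ('s \<Rightarrow> 'a \<Rightarrow> real) \<Rightarrow> real
    \<Rightarrow> ('s \<Rightarrow> 'a \<Rightarrow> real) \<Rightarrow> 's \<Rightarrow> 'a \<Rightarrow> real" where
  "Af P c \<gamma> pol s a = Qf P c \<gamma> pol s a - Vf P c \<gamma> pol s"

definition f_rho :: "('s::finite \<Rightarrow> 'a::finite \<Rightarrow> 's \<Rightarrow> real) \<Rightarrow> ('s \<Rightarrow> 'a \<Rightarrow> real) \<Rightarrow> real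
    \<Rightarrow> ('s \<Rightarrow> real) \<Rightarrow> ('s \<Rightarrow> 'a \<Rightarrow> real) \<Rightarrow> real" where
  "f_rho P c \<gamma> rho pol = (\<Sum>s\<in>UNIV. rho s * Vf P c \<gamma> pol s)"

definition optimal_policy :: "('s::finite \<Rightarrow> 'a::finite \<Rightarrow> 's \<Rightarrow> real) \<Rightarrow> ('s \<Rightarrow> 'a \<Rightarrow> real) \<Rightarrow> real
    \<Rightarrow> ('s \<Rightarrow> 'a \<Rightarrow> real) \<Rightarrow> bool" where
  "optimal_policy P c \<gamma> polstar \<longleftrightarrow> is_policy polstar \<and>
     (\<forall>pol. is_policy pol \<longrightarrow> (\<forall>s. Vf P c \<gamma> polstar s \<le> Vf P c \<gamma> pol s))"

end

theory Submission
  imports Defs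
begin

(* For any policy pi the gap D = V^pi - V^opt satisfies D = g + gamma M_pi D, where M_pi is the
   state-transition matrix of pi and g(s) = sum_a pi(a|s) A^opt(s,a) is its mean optimal advantage.
   Optimality makes every advantage A^opt(s,a) nonnegative, so g >= 0, and a discounted fixed point
   of a stochastic matrix with nonnegative source dominates its source: D >= g.  Hence
   f_rho(pi) - f_rho(pi_opt) >= rho(s) D(s) >= rho(s) pi(a|s) A^opt(s,a) for every pair (s,a),
   and the lower bound on A^opt(sb,ab) turns this into the claimed upper bound on pi(ab|sb). *)

definition stochastic_matrix :: "('s \<Rightarrow> 's \<Rightarrow> real) \<Rightarrow> bool" where
  "stochastic_matrix M \<longleftrightarrow> (\<forall>u v. 0 \<le> M u v) \<and> (\<forall>u. (\<Sum>v\<in>UNIV. M u v) = 1)"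

lemma discounted_fixed_point_ge_source:
  fixes D g :: "'s::finite \<Rightarrow> real" and M :: "'s \<Rightarrow> 's \<Rightarrow> real"
  assumes M: "stochastic_matrix M" and "0 \<le> \<gamma>" and "\<gamma> < 1"
    and fixed_point: "\<And>u. D u = g u + \<gamma> * (\<Sum>v\<in>UNIV. M u v * D v)"
    and g_nonneg: "\<And>u. 0 \<le> g u"
  shows "g u \<le> D u"
proof -
  (* The minimum m of D is at least gamma * m, hence nonnegative, so the averages of D are too. *)
  define m where "m = Min (range D)"
  have m_le: "m \<le> D v" for v
    unfolding m_def by (rule Min_le) auto
  have "m \<in> range D"
    unfolding m_def by (rule Min_in) auto
  then obtain w where w: "D w = m"
    by auto
  have mean_ge: "m \<le> (\<Sum>v\<in>UNIV. M u v * D v)" for u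
  proof -
    have "m = (\<Sum>v\<in>UNIV. M u v * m)"
      using M unfolding stochastic_matrix_def by (simp add: sum_distrib_right[symmetric])
    also have "\<dots> \<le> (\<Sum>v\<in>UNIV. M u v * D v)"
      using M unfolding stochastic_matrix_def by (intro sum_mono mult_left_mono m_le) auto
    finally show ?thesis .
  qed
  have "m \<ge> \<gamma> * m"
    using fixed_point[of w] w g_nonneg[of w] mult_left_mono[OF mean_ge[of w] \<open>0 \<le> \<gamma>\<close>]
    by linarith
  then have "0 \<le> (1 - \<gamma>) * m"
    by (simp add: algebra_simps)
  then have "0 \<le> m"
    using \<open>\<gamma> < 1\<close> by (simp add: zero_le_mult_iff)
  then show ?thesis
    using fixed_point[of u] mult_nonneg_nonneg[OF \<open>0 \<le> \<gamma>\<close> order_trans[OF _ mean_ge[of u]]]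
    by linarith
qed

definition policy_kernel :: "('s::finite \<Rightarrow> 'a::finite \<Rightarrow> 's \<Rightarrow> real) \<Rightarrow> ('s \<Rightarrow> 'a \<Rightarrow> real)
    \<Rightarrow> 's \<Rightarrow> 's \<Rightarrow> real" where
  "policy_kernel P pol u v = (\<Sum>a\<in>UNIV. pol u a * P u a v)"

lemma stochastic_matrix_policy_kernel:
  assumes "stochastic_kernel P" and "is_policy pol"
  shows "stochastic_matrix (policy_kernel P pol)"
proof -
  have "(\<Sum>v\<in>UNIV. policy_kernel P pol u v) = (\<Sum>a\<in>UNIV. pol u a * (\<Sum>v\<in>UNIV. P u a v))" for u
    unfolding policy_kernel_def sum_distrib_left by (rule sum.swap)
  with assms show ?thesis
    unfolding stochastic_matrix_def stochastic_kernel_def is_policy_def policy_kernel_def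
    by (auto intro!: sum_nonneg)
qed

lemma sum_policy_kernel_mult:
  "(\<Sum>v\<in>UNIV. policy_kernel P pol u v * F v) = (\<Sum>a\<in>UNIV. pol u a * (\<Sum>v\<in>UNIV. P u a v * F v))"
  unfolding policy_kernel_def sum_distrib_left sum_distrib_right mult.assoc by (rule sum.swap)

lemma state_dist_Suc:
  "state_dist P pol s (Suc t) v = (\<Sum>u\<in>UNIV. state_dist P pol s t u * policy_kernel P pol u v)"
  by (simp add: policy_kernel_def)

lemma state_dist_Suc_first_step:
  "state_dist P pol s (Suc t) v = (\<Sum>w\<in>UNIV. policy_kernel P pol s w * state_dist P pol w t v)"
proof (induction t arbitrary: v)
  case 0
  show ?case
    by (simp add: policy_kernel_def if_distrib[of "\<lambda>x. x * _"] if_distrib[of "\<lambda>x. _ * x"] cong: if_cong)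
next
  case (Suc t)
  have "state_dist P pol s (Suc (Suc t)) v
      = (\<Sum>u\<in>UNIV. \<Sum>w\<in>UNIV. policy_kernel P pol s w * (state_dist P pol w t u * policy_kernel P pol u v))"
    unfolding state_dist_Suc[of _ _ _ "Suc t"] Suc sum_distrib_right by (simp add: mult.assoc)
  also have "\<dots> = (\<Sum>w\<in>UNIV. policy_kernel P pol s w * state_dist P pol w (Suc t) v)"
    unfolding state_dist_Suc[of _ _ _ t] sum_distrib_left by (rule sum.swap)
  finally show ?case .
qed

lemma state_dist_distribution:
  assumes "stochastic_kernel P" and "is_policy pol"
  shows "is_distribution (state_dist P pol s t)"
proof (induction t)
  case 0
  show ?case unfolding is_distribution_def by simp
next
  case (Suc t)
  have M: "stochastic_matrix (policy_kernel P pol)"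
    using assms by (rule stochastic_matrix_policy_kernel)
  have "(\<Sum>v\<in>UNIV. state_dist P pol s (Suc t) v)
      = (\<Sum>u\<in>UNIV. state_dist P pol s t u * (\<Sum>v\<in>UNIV. policy_kernel P pol u v))"
    unfolding state_dist_Suc sum_distrib_left by (rule sum.swap)
  with Suc M show ?case
    unfolding is_distribution_def stochastic_matrix_def state_dist_Suc
    by (auto intro!: sum_nonneg)
qed

lemma Vf_bellman:
  assumes P: "stochastic_kernel P" and pol: "is_policy pol" and "0 \<le> \<gamma>" and "\<gamma> < 1"
  shows "Vf P c \<gamma> pol s = pol_cost c pol s + \<gamma> * (\<Sum>v\<in>UNIV. policy_kernel P pol s v * Vf P c \<gamma> pol v)"
proof -
  define e where "e t s = (\<Sum>u\<in>UNIV. state_dist P pol s t u * pol_cost c pol u)" for t s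
  have V: "Vf P c \<gamma> pol s = (\<Sum>t. \<gamma> ^ t * e t s)" for s
    unfolding Vf_def e_def ..
  have e_0: "e 0 s = pol_cost c pol s"
    by (simp add: e_def if_distrib[of "\<lambda>x. x * _"] cong: if_cong)
  have e_Suc: "e (Suc t) s = (\<Sum>v\<in>UNIV. policy_kernel P pol s v * e t v)" for t s
    unfolding e_def state_dist_Suc_first_step sum_distrib_left sum_distrib_right mult.assoc
    by (rule sum.swap)
  have e_bound: "\<bar>e t s\<bar> \<le> (\<Sum>u\<in>UNIV. \<bar>pol_cost c pol u\<bar>)" for t s
  proof -
    have d: "is_distribution (state_dist P pol s t)"
      using P pol by (rule state_dist_distribution)
    then have "state_dist P pol s t u \<le> 1" for u
      unfolding is_distribution_def
      by (metis (no_types, lifting) UNIV_I finite_class.finite_UNIV member_le_sum)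
    with d have "\<bar>state_dist P pol s t u * pol_cost c pol u\<bar> \<le> \<bar>pol_cost c pol u\<bar>" for u
      unfolding is_distribution_def by (simp add: abs_mult mult_left_le_one_le)
    then show ?thesis
      unfolding e_def by (rule order_trans[OF sum_abs sum_mono])
  qed
  have summable: "summable (\<lambda>t. \<gamma> ^ t * e t s)" for s
    by (rule summable_comparison_test[where g = "\<lambda>t. \<gamma> ^ t * (\<Sum>u\<in>UNIV. \<bar>pol_cost c pol u\<bar>)"])
       (use e_bound \<open>0 \<le> \<gamma>\<close> \<open>\<gamma> < 1\<close> in
         \<open>auto simp: abs_mult intro!: mult_left_mono summable_mult2 summable_geometric\<close>)
  have "(\<Sum>t. \<gamma> ^ Suc t * e (Suc t) s) = (\<Sum>t. \<gamma> * (\<Sum>v\<in>UNIV. policy_kernel P pol s v * (\<gamma> ^ t * e t v)))"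
    by (simp add: e_Suc sum_distrib_left mult_ac)
  also have "\<dots> = \<gamma> * (\<Sum>v\<in>UNIV. \<Sum>t. policy_kernel P pol s v * (\<gamma> ^ t * e t v))"
    by (subst suminf_sum[symmetric]) (auto intro!: suminf_mult summable_sum summable_mult summable)
  also have "\<dots> = \<gamma> * (\<Sum>v\<in>UNIV. policy_kernel P pol s v * Vf P c \<gamma> pol v)"
    by (simp add: V suminf_mult summable)
  finally show ?thesis
    using suminf_split_head[OF summable[of s]] by (simp add: V e_0)
qed

lemma mean_advantage_eq:
  assumes pol: "is_policy pol"
  shows "(\<Sum>a\<in>UNIV. pol u a * Af P c \<gamma> sig u a)
    = pol_cost c pol u + \<gamma> * (\<Sum>v\<in>UNIV. policy_kernel P pol u v * Vf P c \<gamma> sig v) - Vf P c \<gamma> sig u"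
proof -
  have "(\<Sum>a\<in>UNIV. pol u a * Af P c \<gamma> sig u a)
      = pol_cost c pol u + \<gamma> * (\<Sum>v\<in>UNIV. policy_kernel P pol u v * Vf P c \<gamma> sig v)
        - (\<Sum>a\<in>UNIV. pol u a) * Vf P c \<gamma> sig u"
    unfolding Af_def Qf_def pol_cost_def sum_policy_kernel_mult
    by (simp add: algebra_simps sum.distrib sum_subtractf sum_distrib_left sum_distrib_right)
  moreover have "(\<Sum>a\<in>UNIV. pol u a) = 1"
    using pol unfolding is_policy_def by blast
  ultimately show ?thesis
    by simp
qed

lemma mean_advantage_self:
  assumes "stochastic_kernel P" and "is_policy sig" and "0 \<le> \<gamma>" and "\<gamma> < 1"
  shows "(\<Sum>a\<in>UNIV. sig u a * Af P c \<gamma> sig u a) = 0"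
  using mean_advantage_eq[OF assms(2)] Vf_bellman[OF assms, where c = c and s = u] by simp

lemma Vf_diff_recursion:
  assumes "stochastic_kernel P" and pol: "is_policy pol" and "0 \<le> \<gamma>" and "\<gamma> < 1"
  shows "Vf P c \<gamma> pol u - Vf P c \<gamma> sig u =
     (\<Sum>a\<in>UNIV. pol u a * Af P c \<gamma> sig u a) +
     \<gamma> * (\<Sum>v\<in>UNIV. policy_kernel P pol u v * (Vf P c \<gamma> pol v - Vf P c \<gamma> sig v))"
  using mean_advantage_eq[OF pol] Vf_bellman[OF assms, where c = c and s = u]
  by (simp add: right_diff_distrib sum_subtractf)

lemma mean_advantage_le_Vf_diff:
  assumes P: "stochastic_kernel P" and pol: "is_policy pol" and "0 \<le> \<gamma>" and "\<gamma> < 1"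
    and mean_nonneg: "\<And>u. 0 \<le> (\<Sum>a\<in>UNIV. pol u a * Af P c \<gamma> sig u a)"
  shows "(\<Sum>a\<in>UNIV. pol u a * Af P c \<gamma> sig u a) \<le> Vf P c \<gamma> pol u - Vf P c \<gamma> sig u"
proof (rule discounted_fixed_point_ge_source[where D = "\<lambda>v. Vf P c \<gamma> pol v - Vf P c \<gamma> sig v"
    and g = "\<lambda>v. \<Sum>a\<in>UNIV. pol v a * Af P c \<gamma> sig v a"])
  show "stochastic_matrix (policy_kernel P pol)"
    using P pol by (rule stochastic_matrix_policy_kernel)
  show "Vf P c \<gamma> pol w - Vf P c \<gamma> sig w = (\<Sum>a\<in>UNIV. pol w a * Af P c \<gamma> sig w a)
      + \<gamma> * (\<Sum>v\<in>UNIV. policy_kernel P pol w v * (Vf P c \<gamma> pol v - Vf P c \<gamma> sig v))" for w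
    using assms(1-4) by (rule Vf_diff_recursion)
qed (use mean_nonneg assms(3,4) in auto)

lemma Vf_diff_le_mean_advantage:
  assumes P: "stochastic_kernel P" and pol: "is_policy pol" and "0 \<le> \<gamma>" and "\<gamma> < 1"
    and mean_nonpos: "\<And>u. (\<Sum>a\<in>UNIV. pol u a * Af P c \<gamma> sig u a) \<le> 0"
  shows "Vf P c \<gamma> pol u - Vf P c \<gamma> sig u \<le> (\<Sum>a\<in>UNIV. pol u a * Af P c \<gamma> sig u a)"
proof -
  have "- (\<Sum>a\<in>UNIV. pol u a * Af P c \<gamma> sig u a) \<le> Vf P c \<gamma> sig u - Vf P c \<gamma> pol u"
  proof (rule discounted_fixed_point_ge_source[where D = "\<lambda>v. Vf P c \<gamma> sig v - Vf P c \<gamma> pol v"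
      and g = "\<lambda>v. - (\<Sum>a\<in>UNIV. pol v a * Af P c \<gamma> sig v a)"])
    show "stochastic_matrix (policy_kernel P pol)"
      using P pol by (rule stochastic_matrix_policy_kernel)
    show "Vf P c \<gamma> sig w - Vf P c \<gamma> pol w = - (\<Sum>a\<in>UNIV. pol w a * Af P c \<gamma> sig w a)
        + \<gamma> * (\<Sum>v\<in>UNIV. policy_kernel P pol w v * (Vf P c \<gamma> sig v - Vf P c \<gamma> pol v))" for w
      using Vf_diff_recursion[OF assms(1-4), where c = c and sig = sig and u = w]
      by (simp add: right_diff_distrib sum_subtractf)
  qed (use mean_nonpos assms(3,4) in auto)
  then show ?thesis
    by simp
qed

lemma optimal_policy_advantage_nonneg:
  assumes P: "stochastic_kernel P" and "0 \<le> \<gamma>" and "\<gamma> < 1"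
    and opt: "optimal_policy P c \<gamma> sig"
  shows "0 \<le> Af P c \<gamma> sig s0 a0"
proof (rule ccontr)
  assume neg: "\<not> 0 \<le> Af P c \<gamma> sig s0 a0"
  have sig: "is_policy sig"
    using opt unfolding optimal_policy_def by blast
  (* Deviating from sig to a0 at s0 alone makes the mean advantage A(s0,a0) < 0 at s0 and 0 elsewhere. *)
  define pol where "pol s a = (if s = s0 then (if a = a0 then 1 else 0) else sig s a)" for s a
  have "sum (pol s) UNIV = 1" for s
    by (cases "s = s0") (use sig in \<open>simp_all add: pol_def is_policy_def\<close>)
  with sig have pol: "is_policy pol"
    unfolding is_policy_def pol_def by auto
  have mean_pol: "(\<Sum>a\<in>UNIV. pol u a * Af P c \<gamma> sig u a) = (if u = s0 then Af P c \<gamma> sig s0 a0 else 0)" for u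
    using mean_advantage_self[OF P sig assms(2,3)]
    by (simp add: pol_def if_distrib[of "\<lambda>x. x * _"] cong: if_cong)
  have "Vf P c \<gamma> pol s0 - Vf P c \<gamma> sig s0 \<le> Af P c \<gamma> sig s0 a0"
    using Vf_diff_le_mean_advantage[OF P pol assms(2,3), where c = c and sig = sig and u = s0] neg
    by (simp add: mean_pol)
  moreover have "Vf P c \<gamma> sig s0 \<le> Vf P c \<gamma> pol s0"
    using opt pol unfolding optimal_policy_def by blast
  ultimately show False
    using neg by linarith
qed

lemma f_rho_gap_ge_weighted_advantage:
  assumes P: "stochastic_kernel P" and "0 \<le> \<gamma>" and "\<gamma> < 1"
    and opt: "optimal_policy P c \<gamma> polstar"
    and rho: "is_distribution rho" and pol: "is_policy pol"
  shows "rho s * (pol s a * Af P c \<gamma> polstar s a) \<le> f_rho P c \<gamma> rho pol - f_rho P c \<gamma> rho polstar"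
proof -
  define g where "g u = (\<Sum>b\<in>UNIV. pol u b * Af P c \<gamma> polstar u b)" for u
  have adv_nonneg: "0 \<le> Af P c \<gamma> polstar u b" for u b
    using P assms(2,3) opt by (rule optimal_policy_advantage_nonneg)
  have pol_nonneg: "0 \<le> pol u b" for u b
    using pol unfolding is_policy_def by blast
  have g_nonneg: "0 \<le> g u" for u
    unfolding g_def using adv_nonneg pol_nonneg by (auto intro!: sum_nonneg)
  have g_le: "g u \<le> Vf P c \<gamma> pol u - Vf P c \<gamma> polstar u" for u
    unfolding g_def
    by (rule mean_advantage_le_Vf_diff[OF P pol assms(2,3)]) (use g_nonneg[unfolded g_def] in blast)
  have gap_nonneg: "0 \<le> Vf P c \<gamma> pol u - Vf P c \<gamma> polstar u" for u
    using g_nonneg g_le by (rule order_trans)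
  have rho_nonneg: "0 \<le> rho u" for u
    using rho unfolding is_distribution_def by blast
  have "pol s a * Af P c \<gamma> polstar s a \<le> g s"
    unfolding g_def using adv_nonneg pol_nonneg by (intro member_le_sum) auto
  then have "rho s * (pol s a * Af P c \<gamma> polstar s a) \<le> rho s * (Vf P c \<gamma> pol s - Vf P c \<gamma> polstar s)"
    using g_le rho_nonneg by (meson mult_left_mono order_trans)
  also have "\<dots> \<le> (\<Sum>u\<in>UNIV. rho u * (Vf P c \<gamma> pol u - Vf P c \<gamma> polstar u))"
    using rho_nonneg gap_nonneg by (intro member_le_sum) auto
  also have "\<dots> = f_rho P c \<gamma> rho pol - f_rho P c \<gamma> rho polstar"
    unfolding f_rho_def by (simp add: right_diff_distrib sum_subtractf)
  finally show ?thesis .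
qed

theorem lemma3p8:
  fixes P :: "'s::finite \<Rightarrow> 'a::finite \<Rightarrow> 's \<Rightarrow> real"
    and c :: "'s \<Rightarrow> 'a \<Rightarrow> real"
    and \<gamma> :: real
    and polstar pol0 pol :: "'s \<Rightarrow> 'a \<Rightarrow> real"
    and rho :: "'s \<Rightarrow> real"
    and sb :: 's and ab :: 'a
  assumes "stochastic_kernel P"
    and "0 \<le> \<gamma>" and "\<gamma> < 1"
    and "optimal_policy P c \<gamma> polstar"
    and "is_distribution rho" and "\<forall>s. rho s > 0"
    and "is_policy pol0"
    and "f_rho P c \<gamma> rho pol0 - f_rho P c \<gamma> rho polstar > 0"
    and "polstar sb ab = 0"
    and "pol0 sb ab > 0"
    and "Af P c \<gamma> polstar sb ab \<ge>
           (1 - \<gamma>) / (real CARD('s) * real CARD('a)) *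
           (f_rho P c \<gamma> rho pol0 - f_rho P c \<gamma> rho polstar)"
    and "is_policy pol"
  shows "pol sb ab \<le>
           (real CARD('s) * real CARD('a)) / ((1 - \<gamma>) * rho sb) *
           ((f_rho P c \<gamma> rho pol - f_rho P c \<gamma> rho polstar) /
            (f_rho P c \<gamma> rho pol0 - f_rho P c \<gamma> rho polstar))"
proof -
  define K where "K = real CARD('s) * real CARD('a)"
  define \<Delta> where "\<Delta> = f_rho P c \<gamma> rho pol0 - f_rho P c \<gamma> rho polstar"
  define F where "F = f_rho P c \<gamma> rho pol - f_rho P c \<gamma> rho polstar"
  have "0 < K" "0 < \<Delta>" "0 < rho sb" "0 < 1 - \<gamma>"
    using assms(3,6,8) by (simp_all add: K_def \<Delta>_def)
  have "0 \<le> pol sb ab"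
    using assms(12) unfolding is_policy_def by blast
  then have "rho sb * (pol sb ab * ((1 - \<gamma>) / K * \<Delta>)) \<le> rho sb * (pol sb ab * Af P c \<gamma> polstar sb ab)"
    using assms(11) \<open>0 < rho sb\<close> unfolding K_def \<Delta>_def by (intro mult_left_mono) auto
  also have "\<dots> \<le> F"
    unfolding F_def using assms(1-5,12) by (rule f_rho_gap_ge_weighted_advantage)
  finally have "pol sb ab * ((1 - \<gamma>) * rho sb * \<Delta>) / K \<le> F"
    by (simp add: mult_ac)
  then have "pol sb ab * ((1 - \<gamma>) * rho sb * \<Delta>) \<le> F * K"
    using \<open>0 < K\<close> by (simp add: pos_divide_le_eq)
  then have "pol sb ab \<le> F * K / ((1 - \<gamma>) * rho sb * \<Delta>)"
    using \<open>0 < \<Delta>\<close> \<open>0 < rho sb\<close> \<open>0 < 1 - \<gamma>\<close> by (simp add: pos_le_divide_eq)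
  also have "\<dots> = K / ((1 - \<gamma>) * rho sb) * (F / \<Delta>)"
    by simp
  finally show ?thesis
    unfolding K_def \<Delta>_def F_def .
qed

end
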